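(* Let $k\ge 1$ and let $K$ be a subgroup of the cyclic group $\mathbb{Z}_{2^k}$. Then $\Gamma_{\mathbb{Z}_{2^k},K}$ admits a perfect code if and only if $|K|\in\{1,2,2^k\}$.
   Context: For a subgroup $H$ of a finite abelian group $A$ (written additively with identity $0$), the subgroup sum graph $\Gamma_{A,H}$ is the simple undirected graph with vertex set $A$ in which distinct vertices $x,y$ are adjacent if and only if $x+y\in H\setminus\{0\}$. A perfect code in a graph is a set $C$ of vertices that is independent and such that every vertex not in $C$ is adjacent to exactly one vertex of $C$. *)

theory Defs
  imports "HOL-Number_Theory.Residues"
begin

text \<open>Subgroup sum graph Gamma_{A,H} of an abelian group A (given as a monoid
structure whose operation is the group addition): distinct x, y adjacent iff
x + y lies in H minus the identity.\<close>
definition sum_graph_adj :: "('a, 'b) monoid_scheme \<Rightarrow> 'a set \<Rightarrow> 'a \<Rightarrow> 'a \<Rightarrow> bool" where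
  "sum_graph_adj A H x y \<longleftrightarrow> x \<noteq> y \<and> x \<otimes>\<^bsub>A\<^esub> y \<in> H - {\<one>\<^bsub>A\<^esub>}"

definition perfect_code :: "'a set \<Rightarrow> ('a \<Rightarrow> 'a \<Rightarrow> bool) \<Rightarrow> 'a set \<Rightarrow> bool" where
  "perfect_code V adj C \<longleftrightarrow>
     C \<subseteq> V \<and> (\<forall>x\<in>C. \<forall>y\<in>C. \<not> adj x y) \<and>
     (\<forall>v\<in>V - C. \<exists>!c. c \<in> C \<and> adj v c)"

end

theory Submission
  imports Defs
begin

text \<open>A subgroup \<open>K\<close> of \<open>\<int>\<^sub>n\<close> consists of the multiples of a divisor \<open>d\<close> of \<open>n\<close>, so
\<open>|K| = n/d\<close>. If \<open>|K| = 1\<close> the graph has no edges; if \<open>|K| = 2\<close>, say \<open>K = {0, m}\<close>, its edges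
form the matching \<open>x \<mapsto> m - x\<close>; if \<open>K = \<int>\<^sub>n\<close>, then \<open>{0}\<close> is a perfect code. In every other case
with \<open>n = 2\<^sup>k\<close>, both \<open>d = 2h\<close> and \<open>n/d\<close> are even, and the coset \<open>h + d\<int>\<^sub>n\<close> is a union of
components in which two vertices are adjacent unless they are equal or opposite. This
cocktail party graph has at least two pairs of opposite vertices, and no perfect code
of the whole graph can meet it: a code vertex forces its opposite into the code, and any
third vertex is then dominated twice.\<close>

lemma int_add_subgroup_mult_closed:
  fixes L :: "int set"
  assumes "0 \<in> L" and add: "\<And>x y. x \<in> L \<Longrightarrow> y \<in> L \<Longrightarrow> x + y \<in> L"
    and neg: "\<And>x. x \<in> L \<Longrightarrow> - x \<in> L" and a: "a \<in> L"
  shows "t * a \<in> L"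
proof (induction t rule: int_induct[where k = 0])
  case base
  show ?case using \<open>0 \<in> L\<close> by simp
next
  case (step1 i)
  then show ?case using add[OF _ a] by (simp add: distrib_right)
next
  case (step2 i)
  then show ?case using add[OF _ neg[OF a]] by (simp add: left_diff_distrib)
qed

lemma int_add_subgroup_eq_multiples:
  fixes L :: "int set"
  assumes "0 \<in> L" and add: "\<And>x y. x \<in> L \<Longrightarrow> y \<in> L \<Longrightarrow> x + y \<in> L"
    and neg: "\<And>x. x \<in> L \<Longrightarrow> - x \<in> L" and "n \<in> L" "n > 0"
  obtains d where "d > 0" "L = {z. d dvd z}"
proof -
  have mult: "t * a \<in> L" if "a \<in> L" for t a
    using assms(1) add neg that by (rule int_add_subgroup_mult_closed)
  define P where "P = {x \<in> L. 0 < x \<and> x \<le> n}"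
  define d where "d = Min P"
  have "finite P" unfolding P_def by (rule finite_subset[of _ "{0..n}"]) auto
  moreover have "n \<in> P" using assms(4,5) unfolding P_def by simp
  ultimately have "d \<in> P" and d_min: "\<And>x. x \<in> P \<Longrightarrow> d \<le> x"
    unfolding d_def by (auto intro: Min_in)
  then have d: "d \<in> L" "0 < d" "d \<le> n" unfolding P_def by auto
  have "z \<in> L \<longleftrightarrow> d dvd z" for z
  proof
    assume "z \<in> L"
    then have "z + (- (z div d)) * d \<in> L" using add mult[OF d(1)] by blast
    then have "z mod d \<in> L" by (simp add: minus_div_mult_eq_mod)
    moreover have "0 \<le> z mod d" "z mod d < d" using d(2) by simp_all
    ultimately have "z mod d = 0" using d_min d(3) unfolding P_def by fastforce
    then show "d dvd z" by auto
  next
    assume "d dvd z"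
    then show "z \<in> L" using mult[OF d(1)] by (auto simp: mult.commute)
  qed
  then show thesis using that d(2) by blast
qed

lemma residue_add_subgroup_eq_multiples:
  assumes "n > 1" and K: "subgroup K (add_monoid (residue_ring n))"
  obtains d s where "d > 0" "n = d * s" "K = {x \<in> {0..<n}. d dvd x}"
proof -
  have inv: "m_inv (add_monoid (residue_ring n)) x = (- x) mod n" for x
    using residues.res_neg_eq[of n x] assms(1) unfolding residues_def a_inv_def by simp
  have K_sub: "K \<subseteq> {0..<n}"
    using subgroup.subset[OF K] by (auto simp: residue_ring_def)
  define L where "L = {z. z mod n \<in> K}"
  have "0 \<in> L" using subgroup.one_closed[OF K] by (simp add: L_def residue_ring_def)
  moreover have "x + y \<in> L" if "x \<in> L" "y \<in> L" for x y
    using subgroup.m_closed[OF K that[unfolded L_def mem_Collect_eq]]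
    by (simp add: L_def residue_ring_def mod_add_eq)
  moreover have "- x \<in> L" if "x \<in> L" for x
    using subgroup.m_inv_closed[OF K that[unfolded L_def mem_Collect_eq]]
    unfolding inv by (simp add: L_def mod_minus_eq)
  moreover have "n \<in> L" using \<open>0 \<in> L\<close> by (simp add: L_def)
  ultimately obtain d where d: "d > 0" "L = {z. d dvd z}"
    using int_add_subgroup_eq_multiples assms(1) by (metis zero_less_one order.strict_trans)
  have "K = {x \<in> {0..<n}. x \<in> L}" using K_sub by (auto simp: L_def)
  moreover obtain s where "n = d * s" using \<open>n \<in> L\<close> d(2) by blast
  ultimately show thesis using that d by simp
qed

lemma card_multiples_below:
  fixes d s :: int
  assumes "d > 0" "s \<ge> 0"
  shows "card {x \<in> {0..<d * s}. d dvd x} = nat s"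
proof -
  have "{x \<in> {0..<d * s}. d dvd x} = (*) d ` {0..<s}"
    using assms by (auto simp: zero_le_mult_iff)
  moreover have "inj_on ((*) d) {0..<s}" using assms(1) by (simp add: inj_on_def)
  ultimately show ?thesis by (simp add: card_image)
qed

lemma even_if_dvd_power_two:
  fixes a :: int
  assumes "a dvd 2 ^ k" "a > 1"
  shows "even a"
proof (rule ccontr)
  assume "odd a"
  then have "is_unit a" using coprime_absorb_left[OF assms(1)] by simp
  then show False using assms(2) by simp
qed

lemma perfect_code_involution:
  fixes f :: "'a::linorder \<Rightarrow> 'a"
  assumes f_V: "\<And>x. x \<in> V \<Longrightarrow> f x \<in> V" and f_f: "\<And>x. x \<in> V \<Longrightarrow> f (f x) = x"
    and adj: "\<And>x y. x \<in> V \<Longrightarrow> y \<in> V \<Longrightarrow> adj x y \<longleftrightarrow> x \<noteq> y \<and> y = f x"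
  shows "perfect_code V adj {x \<in> V. x \<le> f x}"
  unfolding perfect_code_def
proof (intro conjI ballI)
  fix x y assume "x \<in> {x \<in> V. x \<le> f x}" "y \<in> {x \<in> V. x \<le> f x}"
  then show "\<not> adj x y" using adj f_f by (metis (no_types, lifting) antisym mem_Collect_eq)
next
  fix v assume v: "v \<in> V - {x \<in> V. x \<le> f x}"
  then have "f v \<in> {x \<in> V. x \<le> f x} \<and> adj v (f v)" using f_V f_f adj by auto
  then show "\<exists>!c. c \<in> {x \<in> V. x \<le> f x} \<and> adj v c" using adj v by blast
qed auto

lemma no_perfect_code_cocktail_party_component:
  assumes code: "perfect_code V adj C"
    and D: "D \<subseteq> V" "2 < card D"
    and closed: "\<And>x y. x \<in> D \<Longrightarrow> y \<in> V \<Longrightarrow> adj x y \<Longrightarrow> y \<in> D"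
    and \<sigma>: "\<And>x. x \<in> D \<Longrightarrow> \<sigma> x \<in> D" "\<And>x. x \<in> D \<Longrightarrow> \<sigma> x \<noteq> x"
      "\<And>x. x \<in> D \<Longrightarrow> \<sigma> (\<sigma> x) = x"
    and adj_D: "\<And>x y. x \<in> D \<Longrightarrow> y \<in> D \<Longrightarrow> adj x y \<longleftrightarrow> x \<noteq> y \<and> y \<noteq> \<sigma> x"
  shows False
proof -
  from code have C: "C \<subseteq> V" and indep: "\<And>x y. x \<in> C \<Longrightarrow> y \<in> C \<Longrightarrow> \<not> adj x y"
    and dom: "\<And>v. v \<in> V \<Longrightarrow> v \<notin> C \<Longrightarrow> \<exists>!c. c \<in> C \<and> adj v c"
    unfolding perfect_code_def by auto
  have neighbour_in_code: "\<exists>c \<in> C \<inter> D. adj v c" if "v \<in> D" "v \<notin> C" for v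
    using dom[of v] closed[of v] that D(1) C by blast
  obtain x0 where "x0 \<in> D" using D(2) by fastforce
  then obtain x where x: "x \<in> C" "x \<in> D"
    using neighbour_in_code by (cases "x0 \<in> C") auto
  have "\<sigma> x \<in> C"
  proof (rule ccontr)
    assume "\<sigma> x \<notin> C"
    then obtain c where "c \<in> C" "c \<in> D" "adj (\<sigma> x) c" using neighbour_in_code \<sigma>(1) x by blast
    then have "adj x c" using adj_D \<sigma> x by metis
    then show False using indep x(1) \<open>c \<in> C\<close> by blast
  qed
  have "\<not> D \<subseteq> {x, \<sigma> x}"
  proof
    assume "D \<subseteq> {x, \<sigma> x}"
    then have "card D \<le> card {x, \<sigma> x}" by (simp add: card_mono)
    also have "\<dots> \<le> 2" by (simp add: card_insert_if)
    finally show False using D(2) by simp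
  qed
  then obtain v where v: "v \<in> D" "v \<noteq> x" "v \<noteq> \<sigma> x" by blast
  then have "adj v x" "adj v (\<sigma> x)" "adj x v" using adj_D \<sigma> x(2) by metis+
  moreover have "v \<notin> C" using indep x(1) \<open>adj x v\<close> by blast
  ultimately show False
    using dom[of v] v(1) D(1) x \<open>\<sigma> x \<in> C\<close> \<sigma>(2) by blast
qed

definition mod_sum_adj :: "int \<Rightarrow> int set \<Rightarrow> int \<Rightarrow> int \<Rightarrow> bool" where
  "mod_sum_adj n K x y \<longleftrightarrow> x \<noteq> y \<and> (x + y) mod n \<in> K - {0}"

lemma sum_graph_adj_residue_ring:
  "sum_graph_adj (add_monoid (residue_ring n)) K = mod_sum_adj n K"
  by (simp add: fun_eq_iff sum_graph_adj_def mod_sum_adj_def residue_ring_def)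

lemma mod_sum_adj_multiples:
  assumes "n > 0" "d dvd n"
  shows "mod_sum_adj n {x \<in> {0..<n}. d dvd x} x y \<longleftrightarrow> x \<noteq> y \<and> d dvd x + y \<and> \<not> n dvd x + y"
  using assms by (auto simp: mod_sum_adj_def dvd_mod_iff)

lemma perfect_code_mod_sum_trivial: "perfect_code {0..<n} (mod_sum_adj n {0}) {0..<n}"
  by (simp add: perfect_code_def mod_sum_adj_def)

lemma perfect_code_mod_sum_full:
  assumes "n > 0"
  shows "perfect_code {0..<n} (mod_sum_adj n {0..<n}) {0}"
  using assms by (auto simp: perfect_code_def mod_sum_adj_def)

lemma perfect_code_mod_sum_order_two:
  assumes "0 < m" "m < n"
  shows "perfect_code {0..<n} (mod_sum_adj n {0, m}) {x \<in> {0..<n}. x \<le> (m - x) mod n}"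
proof (rule perfect_code_involution)
  fix x y :: int assume "x \<in> {0..<n}" "y \<in> {0..<n}"
  have "(x + y) mod n = m mod n \<longleftrightarrow> y mod n = (m - x) mod n"
    by (simp only: mod_eq_dvd_iff) (simp add: algebra_simps)
  then show "mod_sum_adj n {0, m} x y \<longleftrightarrow> x \<noteq> y \<and> y = (m - x) mod n"
    using assms \<open>y \<in> {0..<n}\<close> by (auto simp: mod_sum_adj_def)
next
  fix x :: int assume "x \<in> {0..<n}"
  then show "(m - (m - x) mod n) mod n = x" by (simp add: mod_diff_right_eq)
qed (use assms in simp)

lemma minus_mod_neq_self:
  fixes x :: int
  assumes "d = 2 * h" "h > 0" "x mod d = h" "even s"
  shows "(- x) mod (d * s) \<noteq> x mod (d * s)"
proof
  assume "(- x) mod (d * s) = x mod (d * s)"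
  then have "d * s dvd - x - x" by (simp only: mod_eq_dvd_iff)
  then have "d * s dvd 2 * x" by (metis dvd_minus_iff minus_diff_eq mult_2 diff_minus_eq_add)
  moreover have "x = d * (x div d) + h" using assms(3) mult_div_mod_eq[of d x] by simp
  then have "2 * x = d * (2 * (x div d) + 1)" using assms(1) by (simp add: algebra_simps)
  ultimately have "s dvd 2 * (x div d) + 1" using assms(1,2) by simp
  then show False using assms(4) dvd_trans[of 2 s "2 * (x div d) + 1"] by simp
qed

lemma not_perfect_code_mod_sum:
  assumes d: "d = 2 * h" "h > 0" and n: "n = d * s" and s: "even s" "s \<ge> 3"
  shows "\<not> perfect_code {0..<n} (mod_sum_adj n {x \<in> {0..<n}. d dvd x}) C"
proof
  \<comment> \<open>the sum of two elements of this coset always lies in \<open>d\<int>\<close>\<close>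
  define D where "D = {x \<in> {0..<n}. x mod d = h}"
  have "n > 0" using assms by simp
  have neg_coset: "(- x) mod d = h" if "x mod d = h" for x
    using that d by (simp add: zmod_zminus1_eq_if)
  have adj: "mod_sum_adj n {x \<in> {0..<n}. d dvd x} x y \<longleftrightarrow> x \<noteq> y \<and> d dvd x + y \<and> \<not> n dvd x + y"
    for x y using mod_sum_adj_multiples[OF \<open>n > 0\<close>] n by simp
  assume "perfect_code {0..<n} (mod_sum_adj n {x \<in> {0..<n}. d dvd x}) C"
  then show False
  proof (rule no_perfect_code_cocktail_party_component[where D = D and \<sigma> = "\<lambda>x. (- x) mod n"])
    show D_V: "D \<subseteq> {0..<n}" unfolding D_def by auto
    have "{h, h + d, h + 2 * d} \<subseteq> D"
      using d n s \<open>n > 0\<close> unfolding D_def by auto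
    moreover have "finite D" using D_V finite_subset by blast
    ultimately have "card {h, h + d, h + 2 * d} \<le> card D" by (rule card_mono[rotated])
    then show "2 < card D" using d by simp
  next
    fix x y assume x: "x \<in> D" and y: "y \<in> {0..<n}"
      and "mod_sum_adj n {x \<in> {0..<n}. d dvd x} x y"
    then have "d dvd y - (- x)" unfolding adj by (simp add: add.commute)
    then have "y mod d = (- x) mod d" by (simp only: mod_eq_dvd_iff)
    also have "\<dots> = h" using x neg_coset by (simp add: D_def)
    finally
    show "y \<in> D" using y by (simp add: D_def)
  next
    fix x assume x: "x \<in> D"
    show "(- x) mod n \<in> D"
      using x n \<open>n > 0\<close> neg_coset by (simp add: D_def mod_mod_cancel)
    show "(- ((- x) mod n)) mod n = x"
      using x by (simp add: D_def mod_minus_eq)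
    show "(- x) mod n \<noteq> x"
      using minus_mod_neq_self[OF d _ s(1), of x] x n by (simp add: D_def)
  next
    fix x y assume "x \<in> D" "y \<in> D"
    then have "x mod d = h" "y mod d = h" by (simp_all add: D_def)
    then have "(x + y) mod d = (h + h) mod d" by (metis mod_add_eq)
    then have "d dvd x + y" using d by (simp add: dvd_eq_mod_eq_0)
    have "y = (- x) mod n \<longleftrightarrow> y mod n = (- x) mod n" using \<open>y \<in> D\<close> by (simp add: D_def)
    also have "\<dots> \<longleftrightarrow> n dvd x + y" by (simp only: mod_eq_dvd_iff) (simp add: add.commute)
    finally show "mod_sum_adj n {x \<in> {0..<n}. d dvd x} x y \<longleftrightarrow> x \<noteq> y \<and> y \<noteq> (- x) mod n"
      unfolding adj using \<open>d dvd x + y\<close> by blast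
  qed
qed

lemma perfect_code_mod_sum_exists:
  assumes "n > 0" "K \<subseteq> {0..<n}" "0 \<in> K" "card K \<in> {1, 2, nat n}"
  shows "\<exists>C. perfect_code {0..<n} (mod_sum_adj n K) C"
proof -
  consider "card K = 1" | "card K = 2" | "card K = nat n" using assms(4) by auto
  then show ?thesis
  proof cases
    case 1
    then have "K = {0}" using assms(3) by (auto simp: card_1_singleton_iff)
    then show ?thesis using perfect_code_mod_sum_trivial by blast
  next
    case 2
    then obtain m where "K = {0, m}" "m \<noteq> 0" using assms(3) by (auto simp: card_2_iff)
    moreover have "0 < m" "m < n" using calculation assms(2) by auto
    ultimately show ?thesis using perfect_code_mod_sum_order_two by blast
  next
    case 3
    then have "K = {0..<n}" using card_subset_eq[OF _ assms(2)] by simp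
    then show ?thesis using perfect_code_mod_sum_full assms(1) by blast
  qed
qed

lemma not_perfect_code_mod_sum_power_two:
  assumes n: "n = 2 ^ k" "n = d * s" and "d > 0" "s \<notin> {1, 2, n}"
  shows "\<not> perfect_code {0..<n} (mod_sum_adj n {x \<in> {0..<n}. d dvd x}) C"
proof -
  have "s > 0" using n \<open>d > 0\<close> zero_less_mult_pos[of d s] by simp
  then have "s \<ge> 3" "d > 1" using assms(4) n(2) \<open>d > 0\<close> by auto
  moreover have "d dvd 2 ^ k" "s dvd 2 ^ k" unfolding n(1)[symmetric] n(2) by simp_all
  ultimately have "even d" "even s" using even_if_dvd_power_two by auto
  then obtain h where "d = 2 * h" "h > 0" using \<open>d > 0\<close> by (auto elim: evenE)
  then show ?thesis using not_perfect_code_mod_sum n(2) \<open>even s\<close> \<open>s \<ge> 3\<close> by blast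
qed

theorem corollary3p10:
  fixes k :: nat and K :: "int set"
  assumes "k \<ge> 1"
    and "subgroup K (add_monoid (residue_ring (2 ^ k)))"
  shows "(\<exists>C. perfect_code (carrier (residue_ring (2 ^ k)))
                (sum_graph_adj (add_monoid (residue_ring (2 ^ k))) K) C)
         \<longleftrightarrow> card K \<in> {1, 2, 2 ^ k}"
proof -
  define n :: int where "n = 2 ^ k"
  have "n > 1" using assms(1) by (simp add: n_def)
  obtain d s where d: "d > 0" "n = d * s" and K: "K = {x \<in> {0..<n}. d dvd x}"
    using residue_add_subgroup_eq_multiples[OF \<open>n > 1\<close>] assms(2) n_def by blast
  have "s > 0" using d \<open>n > 1\<close> zero_less_mult_pos[of d s] by simp
  have card_K: "card K \<in> {1, 2, 2 ^ k} \<longleftrightarrow> s \<in> {1, 2, n}"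
    using card_multiples_below[of d s] d K \<open>s > 0\<close> by (auto simp: n_def nat_eq_iff)
  have "(\<exists>C. perfect_code {0..<n} (mod_sum_adj n K) C) \<longleftrightarrow> s \<in> {1, 2, n}"
  proof
    assume "\<exists>C. perfect_code {0..<n} (mod_sum_adj n K) C"
    then show "s \<in> {1, 2, n}" using not_perfect_code_mod_sum_power_two n_def d K by blast
  next
    assume "s \<in> {1, 2, n}"
    then have "card K \<in> {1, 2, nat n}" using card_K by (simp add: n_def nat_power_eq)
    moreover have "K \<subseteq> {0..<n}" "0 \<in> K" using K \<open>n > 1\<close> by auto
    ultimately show "\<exists>C. perfect_code {0..<n} (mod_sum_adj n K) C"
      using perfect_code_mod_sum_exists \<open>n > 1\<close> by simp
  qed
  moreover have "carrier (residue_ring n) = {0..<n}" by (auto simp: residue_ring_def)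
  ultimately show ?thesis
    using card_K unfolding n_def sum_graph_adj_residue_ring by simp
qed

end
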